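(* Let $H\in\mathbb{R}^{N\times n}$ have full column rank, let $\epsilon>0$, and let $\mathcal{T}\subset\{1,\dots,N\}$ be a nonempty index set such that $H_{\mathcal{T}^c}$ has full column rank and $|\mathcal{T}|>\underline{\sigma}_{\mathcal{T}^c}^2/\overline{\sigma}_{\mathcal{T}}^2$, where $\overline{\sigma}_{\mathcal{T}}$ is the largest singular value of $H_{\mathcal{T}}$ and $\underline{\sigma}_{\mathcal{T}^c}$ is the smallest nonzero singular value of $H_{\mathcal{T}^c}$. Define $$\sigma_1=\max_{\mathbf{v}\in\mathbb{R}^n\setminus\{\mathbf{0}\}}\frac{\|H_{\mathcal{T}}\mathbf{v}\|_1}{\|H_{\mathcal{T}^c}\mathbf{v}\|_1},$$ and suppose the set $\{\mathbf{w}\in\mathrm{range}(H):\|\mathbf{w}_{\mathcal{T}}\|_1>\|\mathbf{w}_{\mathcal{T}^c}\|_1\}$ is nonempty. Let $\mathbf{x}_e$ be an optimal solution of $$\max_{\mathbf{x}\in\mathbb{R}^n}\ \|H_{\mathcal{T}}\mathbf{x}\|_1\quad\text{subject to}\quad\|H_{\mathcal{T}^c}\mathbf{x}\|_1\le\epsilon,$$ and define the attack vector $\mathbf{e}\in\mathbb{R}^N$ by $\mathbf{e}_{\mathcal{T}}=H_{\mathcal{T}}\mathbf{x}_e$, $\mathbf{e}_{\mathcal{T}^c}=\mathbf{0}$. Let $\mathbf{x}^\star\in\mathbb{R}^n$, $\mathbf{y}^\star=H\mathbf{x}^\star$ and $\mathbf{y}=\mathbf{y}^\star+\mathbf{e}$,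 and let $\mathcal{D}(\mathbf{y})$ be any minimizer of $\mathbf{z}\mapsto\|\mathbf{y}-H\mathbf{z}\|_1$ over $\mathbb{R}^n$ (note $\mathcal{D}(\mathbf{y}^\star)=\mathbf{x}^\star$). Then $$\|\mathbf{x}^\star-\mathcal{D}(\mathbf{y})\|_2\ge\frac{\sigma_1-1}{\sqrt{|\mathcal{T}|}\,\overline{\sigma}_{\mathcal{T}}-\underline{\sigma}_{\mathcal{T}^c}}\,\epsilon>0\qquad\text{and}\qquad\|\mathbf{y}-H\mathcal{D}(\mathbf{y})\|_2\le\epsilon.$$ Consequently the attack $\mathbf{e}$ is $(\epsilon,\alpha)$-successful for every $\alpha\le\frac{\sigma_1-1}{\sqrt{|\mathcal{T}|}\overline{\sigma}_{\mathcal{T}}-\underline{\sigma}_{\mathcal{T}^c}}\epsilon$.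
   Context: For $\mathcal{T}\subseteq\{1,\dots,N\}$, $H_{\mathcal{T}}$ denotes the submatrix of $H$ formed by the rows indexed by $\mathcal{T}$, $\mathbf{w}_{\mathcal{T}}$ the subvector of $\mathbf{w}$ indexed by $\mathcal{T}$, and $\mathcal{T}^c$ the complement in $\{1,\dots,N\}$. The ($\ell_1$) decoder is $\mathcal{D}(\mathbf{y})\in\arg\min_{\mathbf{z}\in\mathbb{R}^n}\|\mathbf{y}-H\mathbf{z}\|_1$. An attack $\mathbf{e}$ is called $(\epsilon,\alpha)$-successful if, with $\mathbf{y}=\mathbf{y}^\star+\mathbf{e}$ ($\mathbf{y}^\star$ the true, unattacked measurement and $\mathbf{x}^\star=\mathcal{D}(\mathbf{y}^\star)$), one has $\|\mathbf{x}^\star-\mathcal{D}(\mathbf{y})\|_2\ge\alpha$ and $\|\mathbf{y}-H\mathcal{D}(\mathbf{y})\|_2\le\epsilon$. *)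

theory Defs
  imports "HOL-Analysis.Analysis"
begin

text \<open>Row submatrix H_T, represented with zero padding: the rows of H indexed by T are
kept, all other rows are replaced by zero rows.  Zero rows change neither the rank, the
largest singular value, the nonzero singular values, nor the norms of H_T v.\<close>
definition row_sub :: "'m set \<Rightarrow> real^'n^'m \<Rightarrow> real^'n^'m" where
  "row_sub T H = (\<chi> i. if i \<in> T then H $ i else 0)"

definition l1 :: "real^'m \<Rightarrow> real" where
  "l1 w = (\<Sum>i\<in>UNIV. \<bar>w $ i\<bar>)"

definition l1_on :: "'m set \<Rightarrow> real^'m \<Rightarrow> real" where
  "l1_on T w = (\<Sum>i\<in>T. \<bar>w $ i\<bar>)"

definition singular_values :: "real^'n^'m \<Rightarrow> real set" where
  "singular_values A =
     {sqrt c | c. \<exists>v. v \<noteq> 0 \<and> (transpose A ** A) *v v = c *\<^sub>R v}"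

definition largest_singular_value :: "real^'n^'m \<Rightarrow> real" where
  "largest_singular_value A = Max (singular_values A)"

definition smallest_nonzero_singular_value :: "real^'n^'m \<Rightarrow> real" where
  "smallest_nonzero_singular_value A = Min (singular_values A - {0})"

definition is_l1_decoding :: "real^'n^'m \<Rightarrow> real^'m \<Rightarrow> real^'n \<Rightarrow> bool" where
  "is_l1_decoding H y z \<longleftrightarrow> (\<forall>w. l1 (y - H *v z) \<le> l1 (y - H *v w))"

definition successful_attack ::
  "real^'n^'m \<Rightarrow> real^'n \<Rightarrow> real^'m \<Rightarrow> real \<Rightarrow> real \<Rightarrow> bool" where
  "successful_attack H xstar e \<epsilon> \<alpha> \<longleftrightarrow>
     (\<forall>d. is_l1_decoding H (H *v xstar + e) d \<longrightarrow>
        norm (xstar - d) \<ge> \<alpha> \<and> norm ((H *v xstar + e) - H *v d) \<le> \<epsilon>)"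

end

theory Submission
  imports Defs
begin

text \<open>The decoding \<open>x\<^sup>\<star> + x\<^sub>e\<close> leaves the residual \<open>H\<^sub>T\<^sub>c x\<^sub>e\<close>, of \<open>\<ell>\<^sub>1\<close> norm at most
  \<open>\<epsilon>\<close>, so every \<open>\<ell>\<^sub>1\<close> decoding \<open>d\<close> has residual at most \<open>\<epsilon>\<close>.  With \<open>u = x\<^sup>\<star> - d\<close> that
  residual is \<open>H\<^sub>T x\<^sub>e + H u\<close>; splitting it over \<open>T\<close> and its complement gives
  \<open>\<parallel>H\<^sub>T x\<^sub>e\<parallel>\<^sub>1 - \<parallel>H\<^sub>T u\<parallel>\<^sub>1 + \<parallel>H\<^sub>T\<^sub>c u\<parallel>\<^sub>1 \<le> \<epsilon>\<close>.  Optimality of \<open>x\<^sub>e\<close> gives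
  \<open>\<sigma>\<^sub>1 \<epsilon> \<le> \<parallel>H\<^sub>T x\<^sub>e\<parallel>\<^sub>1\<close>, Cauchy-Schwarz and the largest singular value give
  \<open>\<parallel>H\<^sub>T u\<parallel>\<^sub>1 \<le> \<surd>|T| \<sigma>\<^sub>T \<parallel>u\<parallel>\<close>, and the smallest singular value gives
  \<open>\<sigma>\<^sub>T\<^sub>c \<parallel>u\<parallel> \<le> \<parallel>H\<^sub>T\<^sub>c u\<parallel>\<^sub>1\<close>; rearranging bounds \<open>\<parallel>u\<parallel>\<close> from below.  The two singular value
  estimates hold because the Rayleigh quotient of \<open>A\<^sup>T A\<close> attains its extrema on the unit
  sphere, and only at eigenvectors.\<close>

section \<open>Singular values\<close>

lemma inner_mult_vec_Gram:
  fixes A :: "real^'n^'m"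
  shows "(A *v v) \<bullet> (A *v w) = ((transpose A ** A) *v v) \<bullet> w"
  by (metis dot_lmul_matrix matrix_vector_mul_assoc transpose_matrix_vector)

lemma linear_coeff_eq_0_if_quadratic_nonpos:
  fixes a b :: real
  assumes "\<And>t. 2 * t * b + t\<^sup>2 * a \<le> 0"
  shows "b = 0"
proof (rule ccontr)
  assume "b \<noteq> 0"
  define k where "k = \<bar>a\<bar> + 1"
  have "k > 0" and "2 * k + a > 0" by (auto simp: k_def)
  define t where "t = b / k"
  have "2 * t * b + t\<^sup>2 * a = b\<^sup>2 * (2 * k + a) / k\<^sup>2"
    using \<open>k > 0\<close> by (simp add: t_def field_simps power2_eq_square)
  also have "\<dots> > 0"
    using \<open>b \<noteq> 0\<close> \<open>k > 0\<close> \<open>2 * k + a > 0\<close> by simp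
  finally show False using assms[of t] by simp
qed

text \<open>A unit vector extremising the Rayleigh quotient of \<open>A\<^sup>T A\<close> (a maximum for \<open>s > 0\<close>,
  a minimum for \<open>s < 0\<close>) is an eigenvector: along \<open>v + t w\<close> the quotient cannot change
  to first order.\<close>
lemma Gram_eigenvector_if_Rayleigh_extremal:
  fixes A :: "real^'n^'m" and s :: real
  assumes v: "norm v = 1" and "s \<noteq> 0"
    and extremal: "\<forall>w. s * (norm (A *v w))\<^sup>2 \<le> s * ((norm (A *v v))\<^sup>2 * (norm w)\<^sup>2)"
  shows "(transpose A ** A) *v v = (norm (A *v v))\<^sup>2 *\<^sub>R v"
proof -
  define \<mu> where "\<mu> = (norm (A *v v))\<^sup>2"
  define M where "M = transpose A ** A"
  have vv: "v \<bullet> v = 1" using v by (metis norm_eq_1)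
  have "(M *v v) \<bullet> w = \<mu> * (v \<bullet> w)" for w
  proof -
    define b where "b = (A *v v) \<bullet> (A *v w) - \<mu> * (v \<bullet> w)"
    define a where "a = (norm (A *v w))\<^sup>2 - \<mu> * (norm w)\<^sup>2"
    have "2 * t * (s * b) + t\<^sup>2 * (s * a) \<le> 0" for t
    proof -
      have "(norm (A *v (v + t *\<^sub>R w)))\<^sup>2 = \<mu> + 2 * t * ((A *v v) \<bullet> (A *v w)) + t\<^sup>2 * (norm (A *v w))\<^sup>2"
        unfolding \<mu>_def power2_norm_eq_inner
        by (simp add: matrix_vector_right_distrib matrix_vector_mult_scaleR inner_add_left
            inner_add_right inner_commute[of "A *v w" "A *v v"] power2_eq_square algebra_simps)
      moreover have "(norm (v + t *\<^sub>R w))\<^sup>2 = 1 + 2 * t * (v \<bullet> w) + t\<^sup>2 * (norm w)\<^sup>2"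
        unfolding power2_norm_eq_inner
        by (simp add: inner_add_left inner_add_right inner_commute[of w v] vv power2_eq_square
            algebra_simps)
      ultimately show ?thesis
        using extremal[rule_format, of "v + t *\<^sub>R w"]
        unfolding a_def b_def \<mu>_def by (simp add: algebra_simps)
    qed
    then have "s * b = 0" by (rule linear_coeff_eq_0_if_quadratic_nonpos)
    then show ?thesis using \<open>s \<noteq> 0\<close> unfolding b_def M_def by (simp add: inner_mult_vec_Gram)
  qed
  then have "(M *v v - \<mu> *\<^sub>R v) \<bullet> (M *v v - \<mu> *\<^sub>R v) = 0"
    by (simp add: inner_diff_left inner_commute[of _ v])
  then show ?thesis unfolding M_def \<mu>_def by simp
qed

lemma norm_mult_vec_sq_eq_normalize:
  fixes A :: "real^'n^'m"
  shows "(norm (A *v w))\<^sup>2 = (norm (A *v (w /\<^sub>R norm w)))\<^sup>2 * (norm w)\<^sup>2"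
  by (cases "w = 0") (simp_all add: matrix_vector_mult_scaleR power_mult_distrib field_simps)

lemma Rayleigh_max_exists:
  fixes A :: "real^'n^'m"
  obtains v where "norm v = 1" "\<forall>w. (norm (A *v w))\<^sup>2 \<le> (norm (A *v v))\<^sup>2 * (norm w)\<^sup>2"
proof -
  obtain v where v: "v \<in> sphere (0::real^'n) 1"
    and max: "\<forall>u\<in>sphere 0 1. (norm (A *v u))\<^sup>2 \<le> (norm (A *v v))\<^sup>2"
    using continuous_attains_sup[of "sphere 0 1" "\<lambda>v. (norm (A *v v))\<^sup>2"]
    by (fastforce intro!: continuous_intros)
  have "(norm (A *v w))\<^sup>2 \<le> (norm (A *v v))\<^sup>2 * (norm w)\<^sup>2" for w
    using max[rule_format, of "w /\<^sub>R norm w"]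
    by (cases "w = 0") (auto simp: norm_mult_vec_sq_eq_normalize[of A w] intro: mult_right_mono)
  with v that show ?thesis by simp
qed

lemma Rayleigh_min_exists:
  fixes A :: "real^'n^'m"
  obtains v where "norm v = 1" "\<forall>w. (norm (A *v v))\<^sup>2 * (norm w)\<^sup>2 \<le> (norm (A *v w))\<^sup>2"
proof -
  obtain v where v: "v \<in> sphere (0::real^'n) 1"
    and min: "\<forall>u\<in>sphere 0 1. (norm (A *v v))\<^sup>2 \<le> (norm (A *v u))\<^sup>2"
    using continuous_attains_inf[of "sphere 0 1" "\<lambda>v. (norm (A *v v))\<^sup>2"]
    by (fastforce intro!: continuous_intros)
  have "(norm (A *v v))\<^sup>2 * (norm w)\<^sup>2 \<le> (norm (A *v w))\<^sup>2" for w
    using min[rule_format, of "w /\<^sub>R norm w"]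
    by (cases "w = 0") (auto simp: norm_mult_vec_sq_eq_normalize[of A w] intro: mult_right_mono)
  with v that show ?thesis by simp
qed

lemma Gram_eigenvectors_orthogonal:
  fixes A :: "real^'n^'m"
  assumes "(transpose A ** A) *v v = c *\<^sub>R v" "(transpose A ** A) *v w = c' *\<^sub>R w" "c \<noteq> c'"
  shows "orthogonal v w"
proof -
  have "c * (v \<bullet> w) = (A *v v) \<bullet> (A *v w)"
    using assms(1) by (simp add: inner_mult_vec_Gram)
  also have "\<dots> = ((transpose A ** A) *v w) \<bullet> v"
    by (metis inner_commute[of "A *v v"] inner_mult_vec_Gram[of A w v])
  also have "\<dots> = c' * (v \<bullet> w)"
    using assms(2) by (simp add: inner_commute)
  finally show ?thesis using assms(3) by (simp add: orthogonal_def)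
qed

text \<open>Choosing one eigenvector per eigenvalue gives a pairwise orthogonal, hence linearly
  independent, family.\<close>
lemma finite_Gram_eigenvalues:
  fixes A :: "real^'n^'m"
  shows "finite {c. \<exists>v. v \<noteq> 0 \<and> (transpose A ** A) *v v = c *\<^sub>R v}" (is "finite ?E")
proof -
  define g where "g c = (SOME v. v \<noteq> 0 \<and> (transpose A ** A) *v v = c *\<^sub>R v)" for c
  have g: "g c \<noteq> 0 \<and> (transpose A ** A) *v g c = c *\<^sub>R g c" if "c \<in> ?E" for c
  proof -
    from that have "\<exists>v. v \<noteq> 0 \<and> (transpose A ** A) *v v = c *\<^sub>R v" by simp
    then show ?thesis unfolding g_def by (rule someI_ex)
  qed
  have "inj_on g ?E"
  proof (rule inj_onI)
    fix c c' assume c: "c \<in> ?E" and c': "c' \<in> ?E" and "g c = g c'"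
    then have "c' *\<^sub>R g c = (transpose A ** A) *v g c" using g[OF c'] by simp
    then show "c = c'" using g[OF c] by simp
  qed
  moreover have "pairwise orthogonal (g ` ?E)"
  proof (rule pairwiseI)
    fix x y assume "x \<in> g ` ?E" "y \<in> g ` ?E" "x \<noteq> y"
    then obtain c c' where "c \<in> ?E" "c' \<in> ?E" "x = g c" "y = g c'" "c \<noteq> c'" by blast
    then show "orthogonal x y" using g by (blast intro: Gram_eigenvectors_orthogonal)
  qed
  then have "independent (g ` ?E)"
    by (rule pairwise_orthogonal_independent) (use g in force)
  then have "finite (g ` ?E)" by (rule conjunct1[OF independent_bound])
  ultimately show ?thesis by (rule finite_imageD[rotated])
qed

lemma singular_values_eq:
  "singular_values A = sqrt ` {c. \<exists>v. v \<noteq> 0 \<and> (transpose A ** A) *v v = c *\<^sub>R v}"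
  unfolding singular_values_def by blast

lemma finite_singular_values: "finite (singular_values A)"
  unfolding singular_values_eq using finite_Gram_eigenvalues by blast

lemma norm_Rayleigh_extremal_in_singular_values:
  fixes A :: "real^'n^'m"
  assumes "norm v = 1" "s \<noteq> 0"
    and "\<forall>w. s * (norm (A *v w))\<^sup>2 \<le> s * ((norm (A *v v))\<^sup>2 * (norm w)\<^sup>2)"
  shows "norm (A *v v) \<in> singular_values A"
proof -
  have "v \<noteq> 0" using assms(1) by auto
  then have "sqrt ((norm (A *v v))\<^sup>2) \<in> singular_values A"
    using Gram_eigenvector_if_Rayleigh_extremal[OF assms] unfolding singular_values_def by blast
  then show ?thesis by simp
qed

lemma norm_mult_vec_le_largest_singular_value:
  fixes A :: "real^'n^'m"
  shows "norm (A *v u) \<le> largest_singular_value A * norm u"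
proof -
  obtain v where v: "norm v = 1" and max: "\<forall>w. (norm (A *v w))\<^sup>2 \<le> (norm (A *v v))\<^sup>2 * (norm w)\<^sup>2"
    by (rule Rayleigh_max_exists)
  have "norm (A *v v) \<in> singular_values A"
    using v max by (intro norm_Rayleigh_extremal_in_singular_values[where s=1]) simp_all
  then have sv: "norm (A *v v) \<le> largest_singular_value A"
    unfolding largest_singular_value_def by (rule Max_ge[OF finite_singular_values])
  have "(norm (A *v u))\<^sup>2 \<le> (norm (A *v v) * norm u)\<^sup>2"
    using max[rule_format, of u] by (simp only: power_mult_distrib)
  then have "norm (A *v u) \<le> norm (A *v v) * norm u"
    by (rule power2_le_imp_le) simp
  also have "\<dots> \<le> largest_singular_value A * norm u"
    using sv by (rule mult_right_mono) simp
  finally show ?thesis .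
qed

lemma smallest_nonzero_singular_value_le_norm_mult_vec:
  fixes A :: "real^'n^'m"
  assumes "inj ((*v) A)"
  shows "smallest_nonzero_singular_value A * norm u \<le> norm (A *v u)"
proof -
  obtain v where v: "norm v = 1" and min: "\<forall>w. (norm (A *v v))\<^sup>2 * (norm w)\<^sup>2 \<le> (norm (A *v w))\<^sup>2"
    by (rule Rayleigh_min_exists)
  have "norm (A *v v) \<in> singular_values A"
    using v min by (intro norm_Rayleigh_extremal_in_singular_values[where s="-1"]) simp_all
  moreover have "A *v v \<noteq> 0"
    using injD[OF assms, of v 0] v by auto
  ultimately have sv: "smallest_nonzero_singular_value A \<le> norm (A *v v)"
    unfolding smallest_nonzero_singular_value_def by (intro Min_le) (simp_all add: finite_singular_values)
  have "(norm (A *v v) * norm u)\<^sup>2 \<le> (norm (A *v u))\<^sup>2"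
    using min[rule_format, of u] by (simp only: power_mult_distrib)
  then have "norm (A *v v) * norm u \<le> norm (A *v u)"
    by (rule power2_le_imp_le) simp
  have "smallest_nonzero_singular_value A * norm u \<le> norm (A *v v) * norm u"
    using sv by (rule mult_right_mono) simp
  also have "\<dots> \<le> norm (A *v u)" by fact
  finally show ?thesis .
qed

lemma largest_singular_value_pos:
  fixes A :: "real^'n^'m"
  assumes "A *v x \<noteq> 0"
  shows "largest_singular_value A > 0"
proof (rule ccontr)
  assume "\<not> largest_singular_value A > 0"
  then have "largest_singular_value A * norm x \<le> 0" by (simp add: mult_nonpos_nonneg)
  moreover have "norm (A *v x) > 0" using assms by simp
  ultimately show False using norm_mult_vec_le_largest_singular_value[of A x] by linarith
qed

section \<open>Row submatrices and the \<open>\<ell>\<^sub>1\<close> norm\<close>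

lemma row_sub_mult_vec_nth: "(row_sub S H *v x) $ i = (if i \<in> S then (H *v x) $ i else 0)"
  by (simp add: row_sub_def matrix_vector_mult_def)

lemma row_sub_add_row_sub_Compl: "row_sub S H *v x + row_sub (- S) H *v x = H *v x"
  by (simp add: vec_eq_iff row_sub_mult_vec_nth)

lemma l1_row_sub: "l1 (row_sub S H *v x) = l1_on S (H *v x)"
  by (simp add: l1_def l1_on_def row_sub_mult_vec_nth if_distrib sum.If_cases)

lemma l1_nonneg: "l1 z \<ge> 0"
  unfolding l1_def by (simp add: sum_nonneg)

lemma l1_uminus: "l1 (- z) = l1 z"
  by (simp add: l1_def)

lemma l1_scaleR: "l1 (c *\<^sub>R z) = \<bar>c\<bar> * l1 z"
  by (simp add: l1_def abs_mult sum_distrib_left)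

lemma norm_le_l1: "norm z \<le> l1 z"
  unfolding l1_def by (rule norm_le_l1_cart)

lemma l1_le_sqrt_card_mult_norm:
  fixes z :: "real^'m"
  assumes "\<And>i. i \<notin> T \<Longrightarrow> z $ i = 0"
  shows "l1 z \<le> sqrt (real (card T)) * norm z"
proof -
  have "l1 z = (\<Sum>i\<in>T. 1 * \<bar>z $ i\<bar>)"
    unfolding l1_def by (simp add: assms sum.mono_neutral_right)
  moreover have "(norm z)\<^sup>2 = (\<Sum>i\<in>T. \<bar>z $ i\<bar>\<^sup>2)"
    unfolding norm_vec_def L2_set_def
    by (simp add: sum_nonneg assms sum.mono_neutral_right)
  moreover have "(\<Sum>i\<in>T. 1 * \<bar>z $ i\<bar>)\<^sup>2 \<le> (\<Sum>i\<in>T. 1\<^sup>2) * (\<Sum>i\<in>T. \<bar>z $ i\<bar>\<^sup>2)"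
    by (rule Cauchy_Schwarz_ineq_sum)
  ultimately have "(l1 z)\<^sup>2 \<le> (sqrt (real (card T)) * norm z)\<^sup>2"
    by (simp add: power_mult_distrib)
  then show ?thesis by (rule power2_le_imp_le) simp
qed

lemma l1_row_sub_add_ge:
  "l1 (row_sub T H *v x) - l1 (row_sub T H *v u) + l1 (row_sub (- T) H *v u)
     \<le> l1 (row_sub T H *v x + H *v u)"
proof -
  have "l1 (row_sub T H *v x) - l1 (row_sub T H *v u) + l1 (row_sub (- T) H *v u)
    = (\<Sum>i\<in>UNIV. \<bar>(row_sub T H *v x) $ i\<bar> - \<bar>(row_sub T H *v u) $ i\<bar>
                    + \<bar>(row_sub (- T) H *v u) $ i\<bar>)"
    by (simp add: l1_def sum_subtractf sum.distrib)
  also have "\<dots> \<le> l1 (row_sub T H *v x + H *v u)"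
    unfolding l1_def by (rule sum_mono) (auto simp: row_sub_mult_vec_nth)
  finally show ?thesis .
qed

section \<open>The attack\<close>

lemma l1_mult_vec_pos_if_inj:
  fixes C :: "real^'n^'m"
  assumes "inj ((*v) C)" "v \<noteq> 0"
  shows "l1 (C *v v) > 0"
proof -
  have "C *v v \<noteq> 0" using injD[OF assms(1), of v 0] assms(2) by auto
  then have "norm (C *v v) > 0" by simp
  then show ?thesis using norm_le_l1 by (rule less_le_trans)
qed

text \<open>Rescaling \<open>v\<close> onto the constraint boundary \<open>\<parallel>C x\<parallel>\<^sub>1 = \<epsilon>\<close>.\<close>
lemma l1_ratio_le_optimal_value:
  fixes B C :: "real^'n^'m"
  assumes "inj ((*v) C)" and "\<epsilon> > 0"
    and opt: "\<And>x. l1 (C *v x) \<le> \<epsilon> \<Longrightarrow> l1 (B *v x) \<le> L"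
    and "v \<noteq> 0"
  shows "l1 (B *v v) / l1 (C *v v) \<le> L / \<epsilon>"
proof -
  define c where "c = \<epsilon> / l1 (C *v v)"
  have Cv: "l1 (C *v v) > 0" by (rule l1_mult_vec_pos_if_inj) fact+
  then have "c > 0" using \<open>\<epsilon> > 0\<close> by (simp add: c_def)
  have "l1 (C *v (c *\<^sub>R v)) = \<epsilon>"
    using Cv \<open>\<epsilon> > 0\<close> by (simp add: matrix_vector_mult_scaleR l1_scaleR c_def)
  then have "c * l1 (B *v v) \<le> L"
    using opt[of "c *\<^sub>R v"] \<open>c > 0\<close> by (simp add: matrix_vector_mult_scaleR l1_scaleR)
  then show ?thesis
    using Cv \<open>\<epsilon> > 0\<close> by (simp add: c_def field_simps)
qed

lemma Sup_l1_ratio_bounds: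
  fixes B C :: "real^'n^'m"
  assumes "inj ((*v) C)" and "\<epsilon> > 0"
    and "\<And>x. l1 (C *v x) \<le> \<epsilon> \<Longrightarrow> l1 (B *v x) \<le> L"
    and "l1 (C *v x) < l1 (B *v x)"
  defines "\<sigma> \<equiv> Sup {l1 (B *v v) / l1 (C *v v) | v. v \<noteq> 0}"
  shows "1 < \<sigma>" and "\<sigma> * \<epsilon> \<le> L"
proof -
  define S where "S = {l1 (B *v v) / l1 (C *v v) | v. v \<noteq> 0}"
  have bound: "r \<le> L / \<epsilon>" if "r \<in> S" for r
    using that l1_ratio_le_optimal_value[OF assms(1-3)] unfolding S_def by blast
  have "x \<noteq> 0" using assms(4) by (auto simp: l1_def)
  then have "l1 (B *v x) / l1 (C *v x) \<in> S" unfolding S_def by blast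
  moreover have "bdd_above S" using bound by (rule bdd_aboveI)
  ultimately have "l1 (B *v x) / l1 (C *v x) \<le> \<sigma>"
    unfolding \<sigma>_def S_def[symmetric] by (rule cSup_upper)
  moreover have "1 < l1 (B *v x) / l1 (C *v x)"
    using assms(4) l1_mult_vec_pos_if_inj[OF assms(1) \<open>x \<noteq> 0\<close>] by simp
  ultimately show "1 < \<sigma>" by linarith
  have "\<sigma> \<le> L / \<epsilon>"
    unfolding \<sigma>_def S_def[symmetric] using \<open>_ \<in> S\<close> bound by (intro cSup_least) auto
  then show "\<sigma> * \<epsilon> \<le> L" using \<open>\<epsilon> > 0\<close> by (simp add: le_divide_eq)
qed

text \<open>Decoding \<open>x\<^sup>\<star> + x\<^sub>e\<close> leaves exactly the residual \<open>H\<^sub>T\<^sub>c x\<^sub>e\<close>.\<close>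
lemma l1_decoding_residual_le:
  assumes "l1 (row_sub (- T) H *v xe) \<le> \<epsilon>"
    and "is_l1_decoding H (H *v xstar + row_sub T H *v xe) d"
  shows "l1 (H *v xstar + row_sub T H *v xe - H *v d) \<le> \<epsilon>"
proof -
  have "H *v xstar + row_sub T H *v xe - H *v (xstar + xe) = - (row_sub (- T) H *v xe)"
    using row_sub_add_row_sub_Compl[of T H xe]
    by (simp add: matrix_vector_right_distrib algebra_simps)
  then show ?thesis
    using assms unfolding is_l1_decoding_def by (metis l1_uminus order_trans)
qed

lemma l1_decoding_error_lower_bound:
  fixes H :: "real^'n^'m"
  assumes "inj ((*v) (row_sub (- T) H))"
    and "l1 (row_sub (- T) H *v xe) \<le> \<epsilon>"
    and "is_l1_decoding H (H *v xstar + row_sub T H *v xe) d"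
    and "\<sigma> * \<epsilon> \<le> l1 (row_sub T H *v xe)"
  defines "D \<equiv> sqrt (real (card T)) * largest_singular_value (row_sub T H)
                 - smallest_nonzero_singular_value (row_sub (- T) H)"
  assumes "D > 0"
  shows "(\<sigma> - 1) / D * \<epsilon> \<le> norm (xstar - d)"
proof -
  define u where "u = xstar - d"
  have "H *v xstar + row_sub T H *v xe - H *v d = row_sub T H *v xe + H *v u"
    by (simp add: u_def matrix_vector_mult_diff_distrib)
  with l1_decoding_residual_le[OF assms(2,3)]
  have "l1 (row_sub T H *v xe + H *v u) \<le> \<epsilon>" by metis
  then have "l1 (row_sub T H *v xe) - l1 (row_sub T H *v u) + l1 (row_sub (- T) H *v u) \<le> \<epsilon>"
    using l1_row_sub_add_ge[of T H xe u] by linarith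
  moreover have "l1 (row_sub T H *v u) \<le> sqrt (real (card T)) * largest_singular_value (row_sub T H) * norm u"
  proof -
    have "l1 (row_sub T H *v u) \<le> sqrt (real (card T)) * norm (row_sub T H *v u)"
      by (rule l1_le_sqrt_card_mult_norm) (simp add: row_sub_mult_vec_nth)
    also have "\<dots> \<le> sqrt (real (card T)) * (largest_singular_value (row_sub T H) * norm u)"
      by (intro mult_left_mono norm_mult_vec_le_largest_singular_value) simp
    finally show ?thesis by (simp only: mult.assoc)
  qed
  moreover have "smallest_nonzero_singular_value (row_sub (- T) H) * norm u \<le> l1 (row_sub (- T) H *v u)"
    using smallest_nonzero_singular_value_le_norm_mult_vec[OF assms(1)] norm_le_l1 by (rule order_trans)
  ultimately have "(\<sigma> - 1) * \<epsilon> \<le> D * norm u"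
    using assms(4) unfolding D_def left_diff_distrib by linarith
  then show ?thesis
    using \<open>D > 0\<close> by (simp add: u_def field_simps)
qed

lemma lt_sqrt_mult_if_sq_div_sq_lt:
  fixes a b c :: real
  assumes "c\<^sup>2 / b\<^sup>2 < a" and "b > 0"
  shows "c < sqrt a * b"
proof -
  have "c\<^sup>2 < a * b\<^sup>2" using assms by (simp add: pos_divide_less_eq)
  then have "sqrt (c\<^sup>2) < sqrt (a * b\<^sup>2)" by (rule real_sqrt_less_mono)
  then have "\<bar>c\<bar> < sqrt a * b" using assms(2) by (simp add: real_sqrt_mult)
  then show ?thesis by linarith
qed

theorem theorem2:
  fixes H :: "real^'n^'m" and T :: "'m set" and \<epsilon> :: real
    and xe xstar d :: "real^'n" and e y :: "real^'m" and \<sigma>1 :: real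
  assumes Hrank: "rank H = CARD('n)"
    and eps: "\<epsilon> > 0"
    and Tne: "T \<noteq> {}" and Tproper: "T \<noteq> UNIV"
    and Tcrank: "rank (row_sub (- T) H) = CARD('n)"
    and Tcard: "real (card T) >
       (smallest_nonzero_singular_value (row_sub (- T) H))\<^sup>2 /
       (largest_singular_value (row_sub T H))\<^sup>2"
    and sigma1: "\<sigma>1 = Sup {l1 (row_sub T H *v v) / l1 (row_sub (- T) H *v v) | v. v \<noteq> 0}"
    and nonempty: "\<exists>w \<in> range (\<lambda>x. H *v x). l1_on T w > l1_on (- T) w"
    and xe_feas: "l1 (row_sub (- T) H *v xe) \<le> \<epsilon>"
    and xe_opt: "\<forall>x. l1 (row_sub (- T) H *v x) \<le> \<epsilon> \<longrightarrow>
                   l1 (row_sub T H *v x) \<le> l1 (row_sub T H *v xe)"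
    and e_def: "e = (\<chi> i. if i \<in> T then (row_sub T H *v xe) $ i else 0)"
    and y_def: "y = H *v xstar + e"
    and d_dec: "is_l1_decoding H y d"
  shows "norm (xstar - d) \<ge>
           (\<sigma>1 - 1) / (sqrt (real (card T)) * largest_singular_value (row_sub T H)
                        - smallest_nonzero_singular_value (row_sub (- T) H)) * \<epsilon>
       \<and> (\<sigma>1 - 1) / (sqrt (real (card T)) * largest_singular_value (row_sub T H)
                        - smallest_nonzero_singular_value (row_sub (- T) H)) * \<epsilon> > 0
       \<and> norm (y - H *v d) \<le> \<epsilon>
       \<and> (\<forall>\<alpha>. \<alpha> \<le> (\<sigma>1 - 1) / (sqrt (real (card T)) * largest_singular_value (row_sub T H)
                        - smallest_nonzero_singular_value (row_sub (- T) H)) * \<epsilon>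
               \<longrightarrow> successful_attack H xstar e \<epsilon> \<alpha>)"
proof -
  have e: "e = row_sub T H *v xe"
    unfolding e_def by (simp add: vec_eq_iff row_sub_mult_vec_nth)
  have inj: "inj ((*v) (row_sub (- T) H))"
    using Tcrank full_rank_injective by blast
  obtain x where x: "l1 (row_sub (- T) H *v x) < l1 (row_sub T H *v x)"
    using nonempty by (auto simp: l1_row_sub)
  have \<sigma>1: "1 < \<sigma>1" "\<sigma>1 * \<epsilon> \<le> l1 (row_sub T H *v xe)"
    unfolding sigma1 using Sup_l1_ratio_bounds[OF inj eps _ x] xe_opt by blast+
  have "l1 (row_sub T H *v x) > 0"
    using l1_nonneg x by (rule le_less_trans)
  then have "row_sub T H *v x \<noteq> 0" by (auto simp: l1_def)
  then have "largest_singular_value (row_sub T H) > 0"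
    by (rule largest_singular_value_pos)
  then have D: "sqrt (real (card T)) * largest_singular_value (row_sub T H)
                  - smallest_nonzero_singular_value (row_sub (- T) H) > 0"
    using lt_sqrt_mult_if_sq_div_sq_lt[OF Tcard] by simp
  have bounds: "(\<sigma>1 - 1) / (sqrt (real (card T)) * largest_singular_value (row_sub T H)
                    - smallest_nonzero_singular_value (row_sub (- T) H)) * \<epsilon> \<le> norm (xstar - d')
            \<and> norm (y - H *v d') \<le> \<epsilon>" if "is_l1_decoding H y d'" for d'
    using l1_decoding_error_lower_bound[OF inj xe_feas _ \<sigma>1(2) D]
      l1_decoding_residual_le[OF xe_feas] norm_le_l1 order_trans that
    unfolding y_def e by blast
  show ?thesis
    using bounds[OF d_dec] \<sigma>1(1) D eps bounds
    unfolding successful_attack_def y_def[symmetric] by (auto intro: order_trans)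
qed

end
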